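(* Let $p\ge3$, $D=\operatorname{diag}(d_1,\ldots,d_p)$ with $d_j>0$, and $\Gamma=\operatorname{diag}(\gamma_1,\ldots,\gamma_p)$ with $\gamma_j\ge0$, with indices sorted so that $d_1^2/(d_1+\gamma_1)\ge d_2^2/(d_2+\gamma_2)\ge\cdots\ge d_p^2/(d_p+\gamma_p)$. Consider the problem \[ \max_{A}\; c^*(D,A)=\sum_{j=1}^p d_ja_j-2\max_{j=1,\ldots,p} d_ja_j \] over diagonal matrices $A=\operatorname{diag}(a_1,\ldots,a_p)$ with $a_j\ge0$ ($j=1,\ldots,p$) and $\sum_{j=1}^p(d_j+\gamma_j)a_j^2=\sum_{j=1}^p d_j^2/(d_j+\gamma_j)$ (this constraint set is nonempty, containing $a_j=d_j/(d_j+\gamma_j)$). Then: (i) there exists a unique solution $A^\dagger=\operatorname{diag}(a_1^\dagger,\ldots,a_p^\dagger)$ to this problem; (ii) letting $\nu$ be the largest index such that $d_\nu a_\nu^\dagger=\max(d_1a_1^\dagger,\ldots,d_pa_p^\dagger)$, we have $\nu\ge3$, $d_1a_1^\dagger=\cdots=d_\nu a_\nu^\dagger>d_ja_j^\dagger$ for $j\ge\nu+1$, and \[ a_j^\dagger=K_\nu\Big(\sum_{k=1}^\nu\frac{d_k+\gamma_k}{d_k^2}\Big)^{-1}\frac{\nu-2}{d_j}\ (j=1,\ldots,\nu),\qquad a_j^\dagger=K_\nu\frac{d_j}{d_j+\gamma_j}\ (j=\nu+1,\ldots,p), \] where $K_\nu=\{\sum_{j=1}^p d_j^2/(d_j+\gamma_j)\}^{1/2}M_\nu^{-1/2}$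 and \[ M_\nu=\frac{(\nu-2)^2}{\sum_{j=1}^\nu (d_j+\gamma_j)/d_j^2}+\sum_{j=\nu+1}^p\frac{d_j^2}{d_j+\gamma_j}; \] the achieved maximum value is $c^*(D,A^\dagger)=K_\nu M_\nu>0$; (iii) if $X\sim N_p(\theta,D)$ with unknown $\theta\in\mathbb R^p$, then the estimator $\delta_{A^\dagger}(X)=X-\frac{c^*(D,A^\dagger)}{X^\top A^{\dagger\top}A^\dagger X}A^\dagger X$ is minimax under the loss $\|\delta-\theta\|^2$.
   Context: An empty sum is $0$. An estimator $\delta$ of $\theta$ is minimax (under squared Euclidean loss) if $E_\theta\|\delta(X)-\theta\|^2\le\operatorname{tr}(D)=\sum_j d_j$ for all $\theta\in\mathbb R^p$. *)

theory Defs
  imports "HOL-Probability.Probability"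
begin

(* Indices run over {1..p}; a diagonal matrix diag(x_1,...,x_p) is represented by
   the function x :: nat => real restricted to {1..p}. *)

definition feasible :: "nat \<Rightarrow> (nat \<Rightarrow> real) \<Rightarrow> (nat \<Rightarrow> real) \<Rightarrow> (nat \<Rightarrow> real) \<Rightarrow> bool" where
  "feasible p d \<gamma> a \<longleftrightarrow> (\<forall>j\<in>{1..p}. a j \<ge> 0) \<and>
     (\<Sum>j=1..p. (d j + \<gamma> j) * (a j)\<^sup>2) = (\<Sum>j=1..p. (d j)\<^sup>2 / (d j + \<gamma> j))"

definition cstar :: "nat \<Rightarrow> (nat \<Rightarrow> real) \<Rightarrow> (nat \<Rightarrow> real) \<Rightarrow> real" where
  "cstar p d a = (\<Sum>j=1..p. d j * a j) - 2 * Max ((\<lambda>j. d j * a j) ` {1..p})"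

definition is_solution :: "nat \<Rightarrow> (nat \<Rightarrow> real) \<Rightarrow> (nat \<Rightarrow> real) \<Rightarrow> (nat \<Rightarrow> real) \<Rightarrow> bool" where
  "is_solution p d \<gamma> a \<longleftrightarrow> feasible p d \<gamma> a \<and>
     (\<forall>b. feasible p d \<gamma> b \<longrightarrow> cstar p d b \<le> cstar p d a)"

text \<open>Distribution of X ~ N_p(theta, diag(d_1,...,d_p)): independent normal coordinates
  with mean theta j and variance d j (standard deviation sqrt (d j)).\<close>
definition normal_diag :: "nat \<Rightarrow> (nat \<Rightarrow> real) \<Rightarrow> (nat \<Rightarrow> real) \<Rightarrow> (nat \<Rightarrow> real) measure" where
  "normal_diag p \<theta> d = (\<Pi>\<^sub>M j\<in>{1..p}. density lborel (normal_density (\<theta> j) (sqrt (d j))))"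

definition delta_est :: "nat \<Rightarrow> real \<Rightarrow> (nat \<Rightarrow> real) \<Rightarrow> (nat \<Rightarrow> real) \<Rightarrow> nat \<Rightarrow> real" where
  "delta_est p c a x j = x j - c / (\<Sum>k=1..p. (a k * x k)\<^sup>2) * (a j * x j)"

definition minimax :: "nat \<Rightarrow> (nat \<Rightarrow> real) \<Rightarrow> ((nat \<Rightarrow> real) \<Rightarrow> nat \<Rightarrow> real) \<Rightarrow> bool" where
  "minimax p d \<delta> \<longleftrightarrow> (\<forall>\<theta>::nat \<Rightarrow> real.
     (\<integral>\<^sup>+ x. ennreal (\<Sum>j=1..p. (\<delta> x j - \<theta> j)\<^sup>2) \<partial>normal_diag p \<theta> d)
       \<le> ennreal (\<Sum>j=1..p. d j))"

end

theory Submission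
  imports Defs "HOL-Real_Asymp.Real_Asymp"
begin

text \<open>With \<open>b j = d j * a j\<close> and \<open>w j = (d j + \<gamma> j) / (d j)\<^sup>2\<close> (nondecreasing in \<open>j\<close>) the problem
  is to maximise \<open>\<Sum> b - 2 * Max b\<close> over \<open>b \<ge> 0\<close> on the ellipsoid \<open>\<Sum> w j * (b j)\<^sup>2 = S\<close>.
  The maximiser \<open>b\<^sup>*\<close> is constant on the first \<open>\<nu>\<close> coordinates and proportional to \<open>1 / w j\<close>
  beyond, where \<open>\<nu>\<close> is the last index with \<open>(\<nu> - 2) * w \<nu> \<le> w 1 + \<dots> + w \<nu>\<close>. This choice of \<open>\<nu>\<close>
  makes \<open>w * b\<^sup>*\<close> a supergradient of \<open>K * (\<Sum> b - 2 * Max b)\<close> on the orthant, so by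
  Cauchy-Schwarz every admissible \<open>b\<close> has objective at most \<open>S / K = K * M\<close>, with equality only
  at \<open>b\<^sup>*\<close>.

  Minimaxity is Stein's unbiased risk argument: after Stein's identity the risk of
  \<open>X - c / \<parallel>A X\<parallel>\<^sup>2 * A X\<close> exceeds \<open>tr D\<close> by an integral whose integrand is \<open>\<le> 0\<close> as soon as
  \<open>0 \<le> c \<le> 2 * c\<^sup>*(D, A)\<close>.\<close>

section \<open>Stein's identity for normal distributions\<close>

lemma normal_density_tendsto_at_top:
  "(\<sigma>::real) > 0 \<Longrightarrow> (normal_density \<mu> \<sigma> \<longlongrightarrow> 0) at_top"
  unfolding normal_density_def by real_asymp

lemma normal_density_tendsto_at_bot:
  "(\<sigma>::real) > 0 \<Longrightarrow> (normal_density \<mu> \<sigma> \<longlongrightarrow> 0) at_bot"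
  unfolding normal_density_def by real_asymp

lemma normal_density_has_real_derivative:
  assumes "(\<sigma>::real) > 0"
  shows "(normal_density \<mu> \<sigma> has_real_derivative normal_density \<mu> \<sigma> y * (-(y - \<mu>) / \<sigma>\<^sup>2)) (at y)"
proof -
  have "((\<lambda>y. -(y - \<mu>)\<^sup>2 / (2 * \<sigma>\<^sup>2)) has_real_derivative -(y - \<mu>) / \<sigma>\<^sup>2) (at y)"
    using assms by (auto intro!: derivative_eq_intros simp: field_simps power2_eq_square)
  from DERIV_cmult[OF DERIV_chain2[OF DERIV_exp this], of "1 / sqrt (2 * pi * \<sigma>\<^sup>2)"]
  show ?thesis unfolding normal_density_def[abs_def] by (simp add: mult.assoc)
qed

lemma
  fixes g :: "real \<Rightarrow> real"
  assumes \<sigma>: "\<sigma> > 0" and [measurable]: "g \<in> borel_measurable borel" and bound: "\<And>y. \<bar>g y\<bar> \<le> B"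
  shows integrable_normal_density_mult_bounded:
      "integrable lborel (\<lambda>y. normal_density \<mu> \<sigma> y * g y)"
    and integrable_normal_density_mult_centered_bounded:
      "integrable lborel (\<lambda>y. normal_density \<mu> \<sigma> y * ((y - \<mu>) * g y))"
proof -
  have B: "0 \<le> B" using bound[of 0] by linarith
  show "integrable lborel (\<lambda>y. normal_density \<mu> \<sigma> y * g y)"
  proof (rule Bochner_Integration.integrable_bound)
    show "integrable lborel (\<lambda>y. B * normal_density \<mu> \<sigma> y)"
      using integrable_normal_density[OF \<sigma>] by simp
    show "AE y in lborel. norm (normal_density \<mu> \<sigma> y * g y) \<le> norm (B * normal_density \<mu> \<sigma> y)"
      using B bound by (intro AE_I2) (simp add: abs_mult mult.commute mult_right_mono)
  qed measurable
  show "integrable lborel (\<lambda>y. normal_density \<mu> \<sigma> y * ((y - \<mu>) * g y))"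
  proof (rule Bochner_Integration.integrable_bound)
    show "integrable lborel (\<lambda>y. B * (normal_density \<mu> \<sigma> y * \<bar>y - \<mu>\<bar> ^ 1))"
      using integrable_normal_moment_abs[OF \<sigma>, of \<mu> 1] by simp
    show "AE y in lborel. norm (normal_density \<mu> \<sigma> y * ((y - \<mu>) * g y))
        \<le> norm (B * (normal_density \<mu> \<sigma> y * \<bar>y - \<mu>\<bar> ^ 1))"
      using B bound by (intro AE_I2) (simp add: abs_mult ac_simps mult_right_mono)
  qed measurable
qed

text \<open>The derivative of \<open>g * normal_density \<mu> \<sigma>\<close> integrates to \<open>0\<close> over the line.\<close>

lemma stein_identity_normal:
  fixes g g' :: "real \<Rightarrow> real"
  assumes \<sigma>: "\<sigma> > 0"
    and der: "\<And>y. (g has_real_derivative g' y) (at y)" and cont: "continuous_on UNIV g'"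
    and bound: "\<And>y. \<bar>g y\<bar> \<le> B" and bound': "\<And>y. \<bar>g' y\<bar> \<le> B"
  shows "(\<integral>y. normal_density \<mu> \<sigma> y * ((y - \<mu>) * g y) \<partial>lborel)
       = \<sigma>\<^sup>2 * (\<integral>y. normal_density \<mu> \<sigma> y * g' y \<partial>lborel)"
proof -
  let ?\<phi> = "normal_density \<mu> \<sigma>"
  have contg: "continuous_on UNIV g"
    using der by (intro continuous_at_imp_continuous_on) (auto intro: DERIV_isCont)
  have g_meas: "g \<in> borel_measurable borel" and g'_meas: "g' \<in> borel_measurable borel"
    using contg cont by (auto intro: borel_measurable_continuous_onI)
  note int1 = integrable_normal_density_mult_centered_bounded[OF \<sigma> g_meas bound, where \<mu> = \<mu>]
  note int2 = integrable_normal_density_mult_bounded[OF \<sigma> g'_meas bound', where \<mu> = \<mu>]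
  define f where "f y = ?\<phi> y * g' y - (1 / \<sigma>\<^sup>2) * (?\<phi> y * ((y - \<mu>) * g y))" for y
  have f_int: "integrable lborel f"
    unfolding f_def using int1 int2 by simp
  have f_deriv: "((\<lambda>y. g y * ?\<phi> y) has_vector_derivative f y) (at y)" for y
    unfolding has_real_derivative_iff_has_vector_derivative[symmetric]
    by (rule DERIV_mult[OF der normal_density_has_real_derivative[OF \<sigma>], THEN DERIV_cong])
       (use \<sigma> in \<open>simp add: f_def field_simps\<close>)
  have f_cont: "isCont f y" for y
  proof -
    have "isCont ?\<phi> y" using normal_density_has_real_derivative[OF \<sigma>] by (rule DERIV_isCont)
    moreover have "isCont g' y" "isCont g y"
      using cont contg by (auto simp: continuous_on_eq_continuous_at)
    ultimately show ?thesis unfolding f_def by (intro continuous_intros)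
  qed
  have vanish: "((\<lambda>y. g y * ?\<phi> y) \<longlongrightarrow> 0) F" if "(?\<phi> \<longlongrightarrow> 0) F" for F
  proof (rule Lim_null_comparison)
    show "\<forall>\<^sub>F y in F. norm (g y * ?\<phi> y) \<le> B * ?\<phi> y"
      using bound by (auto simp: abs_mult intro!: always_eventually mult_right_mono)
    show "((\<lambda>y. B * ?\<phi> y) \<longlongrightarrow> 0) F"
      using tendsto_mult_left[OF that, of B] by simp
  qed
  have "(LBINT y=-\<infinity>..\<infinity>. f y) = 0 - 0"
    by (rule interval_integral_FTC_integrable[where F = "\<lambda>y. g y * ?\<phi> y"])
       (use f_deriv f_cont f_int vanish[OF normal_density_tendsto_at_top[OF \<sigma>]]
          vanish[OF normal_density_tendsto_at_bot[OF \<sigma>]]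
        in \<open>auto simp: ereal_tendsto_simps1 set_integrable_def\<close>)
  then have "integral\<^sup>L lborel f = 0"
    by (simp add: interval_lebesgue_integral_def set_lebesgue_integral_def)
  moreover have "integral\<^sup>L lborel f = (\<integral>y. ?\<phi> y * g' y \<partial>lborel)
      - (1 / \<sigma>\<^sup>2) * (\<integral>y. ?\<phi> y * ((y - \<mu>) * g y) \<partial>lborel)"
    unfolding f_def using int1 int2 by simp
  ultimately show ?thesis
    using \<sigma> by (simp add: field_simps)
qed

definition normal_factor :: "('i \<Rightarrow> real) \<Rightarrow> ('i \<Rightarrow> real) \<Rightarrow> 'i \<Rightarrow> real measure" where
  "normal_factor \<mu> \<sigma> i = density lborel (normal_density (\<mu> i) (\<sigma> i))"

lemma prob_space_normal_factor: "\<sigma> i > 0 \<Longrightarrow> prob_space (normal_factor \<mu> \<sigma> i)"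
  unfolding normal_factor_def by (rule prob_space_normal_density)

lemma sets_normal_factor [simp, measurable_cong]: "sets (normal_factor \<mu> \<sigma> i) = sets borel"
  by (simp add: normal_factor_def)

lemma product_sigma_finite_normal_factor:
  "(\<And>i. \<sigma> i > 0) \<Longrightarrow> product_sigma_finite (normal_factor \<mu> \<sigma>)"
  unfolding product_sigma_finite_def
  by (auto intro: prob_space_imp_sigma_finite prob_space_normal_factor)

lemma integral_normal_factor:
  "f \<in> borel_measurable borel \<Longrightarrow>
    (\<integral>y. f y \<partial>normal_factor \<mu> \<sigma> i) = (\<integral>y. normal_density (\<mu> i) (\<sigma> i) y * f y \<partial>lborel)"
  unfolding normal_factor_def by (subst integral_density) auto

lemma
  fixes f :: "real \<Rightarrow> real"
  assumes M: "\<And>i. i \<in> I \<Longrightarrow> prob_space (M i)" and j: "j \<in> I"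
    and f: "f \<in> borel_measurable (M j)"
  shows integrable_PiM_component:
      "integrable (M j) f \<Longrightarrow> integrable (PiM I M) (\<lambda>x. f (x j))"
    and integral_PiM_component: "(\<integral>x. f (x j) \<partial>PiM I M) = (\<integral>y. f y \<partial>M j)"
proof -
  have distr: "distr (PiM I M) (M j) (\<lambda>x. x j) = M j"
    by (rule distr_PiM_component[OF M j])
  have comp: "(\<lambda>x. x j) \<in> measurable (PiM I M) (M j)"
    using j by (rule measurable_component_singleton)
  show "integrable (M j) f \<Longrightarrow> integrable (PiM I M) (\<lambda>x. f (x j))"
    using integrable_distr_eq[OF comp f] distr by simp
  show "(\<integral>x. f (x j) \<partial>PiM I M) = (\<integral>y. f y \<partial>M j)"
    using integral_distr[OF comp f] distr by simp
qed

lemma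
  assumes \<sigma>: "\<And>i. \<sigma> i > 0" and j: "j \<in> I"
  shows integrable_PiM_normal_factor_square:
      "integrable (PiM I (normal_factor \<mu> \<sigma>)) (\<lambda>x. (x j - \<mu> j)\<^sup>2)"
    and integral_PiM_normal_factor_square:
      "(\<integral>x. (x j - \<mu> j)\<^sup>2 \<partial>PiM I (normal_factor \<mu> \<sigma>)) = (\<sigma> j)\<^sup>2"
    and integrable_PiM_normal_factor_abs:
      "integrable (PiM I (normal_factor \<mu> \<sigma>)) (\<lambda>x. \<bar>x j - \<mu> j\<bar>)"
proof -
  note M = prob_space_normal_factor[where \<sigma> = \<sigma>, OF \<sigma>]
  have "integrable (normal_factor \<mu> \<sigma> j) (\<lambda>y. (y - \<mu> j)\<^sup>2)"
    unfolding normal_factor_def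
    using integrable_normal_moment[OF \<sigma>[of j], of "\<mu> j" 2] by (subst integrable_density) auto
  then show "integrable (PiM I (normal_factor \<mu> \<sigma>)) (\<lambda>x. (x j - \<mu> j)\<^sup>2)"
    by (rule integrable_PiM_component[OF M j, rotated]) simp
  have "integrable (normal_factor \<mu> \<sigma> j) (\<lambda>y. \<bar>y - \<mu> j\<bar>)"
    unfolding normal_factor_def
    using integrable_normal_moment_abs[OF \<sigma>[of j], of "\<mu> j" 1] by (subst integrable_density) auto
  then show "integrable (PiM I (normal_factor \<mu> \<sigma>)) (\<lambda>x. \<bar>x j - \<mu> j\<bar>)"
    by (rule integrable_PiM_component[OF M j, rotated]) simp
  have "(\<integral>y. normal_density (\<mu> j) (\<sigma> j) y * (y - \<mu> j)\<^sup>2 \<partial>lborel) = (\<sigma> j)\<^sup>2"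
    using integral_normal_moment_even[OF \<sigma>[of j], of "\<mu> j" 1] \<sigma>[of j] by simp
  then show "(\<integral>x. (x j - \<mu> j)\<^sup>2 \<partial>PiM I (normal_factor \<mu> \<sigma>)) = (\<sigma> j)\<^sup>2"
    by (simp add: integral_PiM_component[OF M j, of "\<lambda>y. (y - \<mu> j)\<^sup>2"] integral_normal_factor)
qed

text \<open>Stein's identity in coordinate \<open>j\<close> of a product of normal distributions: \<open>g x\<close> may depend
  on the other coordinates of \<open>x\<close>, which are integrated out last by Fubini.\<close>

lemma
  fixes g g' :: "('i \<Rightarrow> real) \<Rightarrow> real \<Rightarrow> real"
  assumes \<sigma>: "\<And>i. \<sigma> i > 0" and I: "finite I" and j: "j \<in> I"
    and der: "\<And>x y. (g x has_real_derivative g' x y) (at y)"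
    and cont: "\<And>x. continuous_on UNIV (g' x)"
    and bound: "\<And>x y. \<bar>g x y\<bar> \<le> B" and bound': "\<And>x y. \<bar>g' x y\<bar> \<le> B"
    and upd: "\<And>x y. g (x(j := y)) = g x" and upd': "\<And>x y. g' (x(j := y)) = g' x"
    and meas: "(\<lambda>x. g x (x j)) \<in> borel_measurable (PiM I (normal_factor \<mu> \<sigma>))"
    and meas': "(\<lambda>x. g' x (x j)) \<in> borel_measurable (PiM I (normal_factor \<mu> \<sigma>))"
  shows integrable_stein_product_normal:
      "integrable (PiM I (normal_factor \<mu> \<sigma>)) (\<lambda>x. (x j - \<mu> j) * g x (x j))"
      "integrable (PiM I (normal_factor \<mu> \<sigma>)) (\<lambda>x. g' x (x j))"
    and stein_identity_product_normal:
      "(\<integral>x. (x j - \<mu> j) * g x (x j) \<partial>PiM I (normal_factor \<mu> \<sigma>))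
       = (\<sigma> j)\<^sup>2 * (\<integral>x. g' x (x j) \<partial>PiM I (normal_factor \<mu> \<sigma>))"
proof -
  let ?P = "PiM I (normal_factor \<mu> \<sigma>)"
  interpret product_sigma_finite "normal_factor \<mu> \<sigma>"
    by (rule product_sigma_finite_normal_factor[OF \<sigma>])
  interpret P: prob_space ?P
    by (rule prob_space_PiM) (rule prob_space_normal_factor[where \<sigma> = \<sigma>, OF \<sigma>])
  show int1: "integrable ?P (\<lambda>x. (x j - \<mu> j) * g x (x j))"
  proof (rule Bochner_Integration.integrable_bound)
    show "integrable ?P (\<lambda>x. B * \<bar>x j - \<mu> j\<bar>)"
      using integrable_PiM_normal_factor_abs[where \<sigma> = \<sigma>, OF \<sigma> j] by simp
    have "\<bar>g x (x j)\<bar> * \<bar>x j - \<mu> j\<bar> \<le> \<bar>B\<bar> * \<bar>x j - \<mu> j\<bar>" for x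
      using bound[of x "x j"] by (intro mult_right_mono) auto
    then show "AE x in ?P. norm ((x j - \<mu> j) * g x (x j)) \<le> norm (B * \<bar>x j - \<mu> j\<bar>)"
      by (intro AE_I2) (simp add: abs_mult mult.commute)
  qed (use j meas in measurable)
  show int2: "integrable ?P (\<lambda>x. g' x (x j))"
    by (rule P.integrable_const_bound[where B = B]) (use bound' meas' in auto)
  have g_meas: "g x \<in> borel_measurable borel" for x
    using der by (intro borel_measurable_continuous_onI continuous_at_imp_continuous_on)
                 (auto intro: DERIV_isCont)
  have g'_meas: "g' x \<in> borel_measurable borel" for x
    using cont by (rule borel_measurable_continuous_onI)
  have inner: "(\<integral>y. (y - \<mu> j) * g x y \<partial>normal_factor \<mu> \<sigma> j)
      = (\<sigma> j)\<^sup>2 * (\<integral>y. g' x y \<partial>normal_factor \<mu> \<sigma> j)" for x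
    using g_meas[of x] g'_meas[of x]
    by (simp add: integral_normal_factor stein_identity_normal[OF \<sigma> der cont bound bound'])
  have I': "finite (I - {j})" "j \<notin> I - {j}" and I_eq: "insert j (I - {j}) = I"
    using I j by auto
  have "(\<integral>x. (x j - \<mu> j) * g x (x j) \<partial>?P)
      = (\<integral>x. (\<integral>y. (y - \<mu> j) * g x y \<partial>normal_factor \<mu> \<sigma> j) \<partial>PiM (I - {j}) (normal_factor \<mu> \<sigma>))"
    using product_integral_insert[OF I', of "\<lambda>x. (x j - \<mu> j) * g x (x j)"] int1
    unfolding I_eq by (simp add: upd)
  also have "\<dots> = (\<sigma> j)\<^sup>2 * (\<integral>x. (\<integral>y. g' x y \<partial>normal_factor \<mu> \<sigma> j) \<partial>PiM (I - {j}) (normal_factor \<mu> \<sigma>))"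
    by (simp add: inner)
  also have "\<dots> = (\<sigma> j)\<^sup>2 * (\<integral>x. g' x (x j) \<partial>?P)"
    using product_integral_insert[OF I', of "\<lambda>x. g' x (x j)"] int2
    unfolding I_eq by (simp add: upd')
  finally show "(\<integral>x. (x j - \<mu> j) * g x (x j) \<partial>?P) = (\<sigma> j)\<^sup>2 * (\<integral>x. g' x (x j) \<partial>?P)" .
qed

section \<open>Risk of the shrinkage estimator\<close>

definition shrink :: "real \<Rightarrow> real \<Rightarrow> real \<Rightarrow> real" where
  "shrink a r y = a * y / ((a * y)\<^sup>2 + r)"

definition shrink_deriv :: "real \<Rightarrow> real \<Rightarrow> real \<Rightarrow> real" where
  "shrink_deriv a r y = a / ((a * y)\<^sup>2 + r) - 2 * a ^ 3 * y\<^sup>2 / ((a * y)\<^sup>2 + r)\<^sup>2"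

lemma shrink_has_real_derivative:
  assumes "r > 0"
  shows "(shrink a r has_real_derivative shrink_deriv a r y) (at y)"
proof -
  define D where "D = (a * y)\<^sup>2 + r"
  have D: "D > 0" unfolding D_def using assms by (simp add: add_nonneg_pos)
  have "((\<lambda>y. a * y / ((a * y)\<^sup>2 + r)) has_real_derivative
      (a * D - a * y * (2 * a * (a * y))) / D\<^sup>2) (at y)"
    unfolding D_def using D[unfolded D_def]
    by (auto intro!: derivative_eq_intros simp: power2_eq_square)
  moreover have "(a * D - a * y * (2 * a * (a * y))) / D\<^sup>2 = shrink_deriv a r y"
    unfolding shrink_deriv_def D_def[symmetric] using D
    by (simp add: power2_eq_square power3_eq_cube field_simps)
  ultimately show ?thesis unfolding shrink_def[abs_def] by simp
qed

lemma continuous_on_shrink_deriv: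
  assumes "r > 0"
  shows "continuous_on UNIV (shrink_deriv a r)"
proof -
  have "(a * y)\<^sup>2 + r \<noteq> 0" for y
    using assms by (metis add_nonneg_pos less_irrefl zero_le_power2)
  then show ?thesis
    unfolding shrink_deriv_def[abs_def] by (intro continuous_intros) auto
qed

lemma abs_shrink_le:
  assumes "0 < e" "e \<le> r"
  shows "\<bar>shrink a r y\<bar> \<le> 1 + 1 / e"
proof -
  have pos: "(a * y)\<^sup>2 + r > 0" using assms by (simp add: add_nonneg_pos)
  have "(\<bar>a * y\<bar> - 1)\<^sup>2 = (a * y)\<^sup>2 - 2 * \<bar>a * y\<bar> + 1"
    by (simp add: power2_eq_square algebra_simps abs_mult_self_eq)
  then have "\<bar>a * y\<bar> \<le> (a * y)\<^sup>2 + 1"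
    using zero_le_power2[of "\<bar>a * y\<bar> - 1"] by linarith
  also have "\<dots> \<le> ((a * y)\<^sup>2 + r) * (1 + 1 / e)"
  proof -
    have "1 \<le> r / e" "0 \<le> (a * y)\<^sup>2 / e" using assms by auto
    moreover have "((a * y)\<^sup>2 + r) * (1 + 1 / e) = (a * y)\<^sup>2 + r + (a * y)\<^sup>2 / e + r / e"
      using assms by (simp add: field_simps)
    ultimately show ?thesis using assms by linarith
  qed
  finally show ?thesis
    unfolding shrink_def using pos by (simp add: abs_divide divide_le_eq mult.commute)
qed

lemma abs_shrink_deriv_le:
  assumes "0 < e" "e \<le> r" "a > 0"
  shows "\<bar>shrink_deriv a r y\<bar> \<le> 3 * a / e"
proof -
  define u where "u = (a * y)\<^sup>2"
  have u: "u \<ge> 0" and pos: "u + r > 0" using assms by (auto simp: u_def add_nonneg_pos)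
  have first: "a / (u + r) \<le> a / e"
    using assms u by (intro divide_left_mono) auto
  have "2 * a ^ 3 * y\<^sup>2 / (u + r)\<^sup>2 = 2 * a * (u / (u + r)) * (1 / (u + r))"
    using pos by (simp add: u_def power2_eq_square power3_eq_cube field_simps)
  also have "\<dots> \<le> 2 * a * 1 * (1 / e)"
    using assms u pos by (intro mult_mono divide_left_mono) auto
  finally have second: "2 * a ^ 3 * y\<^sup>2 / (u + r)\<^sup>2 \<le> 2 * a / e" by simp
  have "0 \<le> a / (u + r)" "0 \<le> 2 * a ^ 3 * y\<^sup>2 / (u + r)\<^sup>2"
    using assms pos by auto
  then show ?thesis
    using first second unfolding shrink_deriv_def u_def[symmetric] by (simp add: abs_le_iff)
qed

lemma
  fixes \<sigma> \<mu> a :: "'i \<Rightarrow> real"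
  assumes \<sigma>: "\<And>i. \<sigma> i > 0" and I: "finite I" and j: "j \<in> I" and e: "e > 0" and a: "a j > 0"
  defines "E \<equiv> \<lambda>x. (\<Sum>k\<in>I. (a k * x k)\<^sup>2) + e"
  shows integrable_stein_shrinkage:
      "integrable (PiM I (normal_factor \<mu> \<sigma>)) (\<lambda>x. (x j - \<mu> j) * (a j * x j / E x))"
      "integrable (PiM I (normal_factor \<mu> \<sigma>)) (\<lambda>x. a j / E x - 2 * a j ^ 3 * (x j)\<^sup>2 / (E x)\<^sup>2)"
    and stein_identity_shrinkage:
      "(\<integral>x. (x j - \<mu> j) * (a j * x j / E x) \<partial>PiM I (normal_factor \<mu> \<sigma>))
       = (\<sigma> j)\<^sup>2 * (\<integral>x. a j / E x - 2 * a j ^ 3 * (x j)\<^sup>2 / (E x)\<^sup>2 \<partial>PiM I (normal_factor \<mu> \<sigma>))"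
proof -
  define r where "r x = (\<Sum>k\<in>I - {j}. (a k * x k)\<^sup>2) + e" for x :: "'i \<Rightarrow> real"
  have r: "e \<le> r x" "0 < r x" for x
    using e by (auto simp: r_def sum_nonneg add_nonneg_pos)
  have E_r: "E x = (a j * x j)\<^sup>2 + r x" for x
    unfolding E_def r_def using I j by (simp add: sum.remove)
  have shrink_E: "shrink (a j) (r x) (x j) = a j * x j / E x" for x
    by (simp add: shrink_def E_r)
  have shrink_deriv_E: "shrink_deriv (a j) (r x) (x j) = a j / E x - 2 * a j ^ 3 * (x j)\<^sup>2 / (E x)\<^sup>2" for x
    by (simp add: shrink_deriv_def E_r)
  have r_upd: "r (x(j := y)) = r x" for x y
    unfolding r_def by (intro arg_cong2[where f = "(+)"] sum.cong) auto
  let ?B = "max (1 + 1 / e) (3 * a j / e)"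
  note stein = integrable_stein_product_normal stein_identity_product_normal
  note stein = stein[where g = "\<lambda>x. shrink (a j) (r x)" and g' = "\<lambda>x. shrink_deriv (a j) (r x)"
      and B = ?B, OF \<sigma> I j shrink_has_real_derivative[OF r(2)] continuous_on_shrink_deriv[OF r(2)]]
  have bounds: "\<bar>shrink (a j) (r x) y\<bar> \<le> ?B" "\<bar>shrink_deriv (a j) (r x) y\<bar> \<le> ?B" for x y
    using abs_shrink_le[OF e r(1)] abs_shrink_deriv_le[OF e r(1) a] by (auto intro: max.coboundedI1 max.coboundedI2)
  have meas: "(\<lambda>x. shrink (a j) (r x) (x j)) \<in> borel_measurable (PiM I (normal_factor \<mu> \<sigma>))"
    "(\<lambda>x. shrink_deriv (a j) (r x) (x j)) \<in> borel_measurable (PiM I (normal_factor \<mu> \<sigma>))"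
    unfolding shrink_def shrink_deriv_def r_def using j by measurable
  note stein = stein[OF bounds, unfolded r_upd, OF refl refl meas, unfolded shrink_E shrink_deriv_E]
  show "integrable (PiM I (normal_factor \<mu> \<sigma>)) (\<lambda>x. (x j - \<mu> j) * (a j * x j / E x))"
    "integrable (PiM I (normal_factor \<mu> \<sigma>)) (\<lambda>x. a j / E x - 2 * a j ^ 3 * (x j)\<^sup>2 / (E x)\<^sup>2)"
    "(\<integral>x. (x j - \<mu> j) * (a j * x j / E x) \<partial>PiM I (normal_factor \<mu> \<sigma>))
       = (\<sigma> j)\<^sup>2 * (\<integral>x. a j / E x - 2 * a j ^ 3 * (x j)\<^sup>2 / (E x)\<^sup>2 \<partial>PiM I (normal_factor \<mu> \<sigma>))"
    by (fact stein)+
qed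

lemma shrinkage_divergence_lower_bound:
  fixes a d x :: "'i \<Rightarrow> real"
  assumes e: "e > 0" and m: "0 \<le> m" "\<And>j. j \<in> I \<Longrightarrow> d j * a j \<le> m"
  defines "E \<equiv> (\<Sum>k\<in>I. (a k * x k)\<^sup>2) + e"
  shows "((\<Sum>j\<in>I. d j * a j) - 2 * m) / E \<le> (\<Sum>j\<in>I. d j * (a j / E - 2 * a j ^ 3 * (x j)\<^sup>2 / E\<^sup>2))"
proof -
  define R where "R = (\<Sum>k\<in>I. (a k * x k)\<^sup>2)"
  have R: "0 \<le> R" "R \<le> E" and E: "0 < E"
    using e by (auto simp: R_def E_def sum_nonneg add_nonneg_pos)
  have "(\<Sum>j\<in>I. 2 * (d j * a j) * (a j * x j)\<^sup>2 / E\<^sup>2) \<le> (\<Sum>j\<in>I. 2 * m * (a j * x j)\<^sup>2 / E\<^sup>2)"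
    using m by (intro sum_mono divide_right_mono mult_right_mono) auto
  also have "\<dots> = 2 * m * (R / E) / E"
    unfolding R_def by (simp add: sum_divide_distrib sum_distrib_left power2_eq_square)
  also have "\<dots> \<le> 2 * m / E"
    using R E m(1) by (intro divide_right_mono mult_left_le) auto
  finally have "(\<Sum>j\<in>I. 2 * (d j * a j) * (a j * x j)\<^sup>2 / E\<^sup>2) \<le> 2 * m / E" .
  moreover have "(\<Sum>j\<in>I. d j * (a j / E - 2 * a j ^ 3 * (x j)\<^sup>2 / E\<^sup>2))
      = (\<Sum>j\<in>I. d j * a j) / E - (\<Sum>j\<in>I. 2 * (d j * a j) * (a j * x j)\<^sup>2 / E\<^sup>2)"
    by (simp add: sum_subtractf sum_divide_distrib power2_eq_square power3_eq_cube field_simps)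
  ultimately show ?thesis
    by (simp add: diff_divide_distrib)
qed

text \<open>After Stein's identity the cross term of the squared loss is matched by the derivative term,
  so it suffices that the square of the shrinkage is dominated by its divergence.\<close>

lemma shrinkage_loss_le_unbiased_risk_estimate:
  fixes a d x \<mu> :: "'i \<Rightarrow> real"
  assumes e: "e > 0" and c: "0 \<le> c" "c \<le> 2 * ((\<Sum>j\<in>I. d j * a j) - 2 * m)"
    and m: "0 \<le> m" "\<And>j. j \<in> I \<Longrightarrow> d j * a j \<le> m"
  defines "E \<equiv> (\<Sum>k\<in>I. (a k * x k)\<^sup>2) + e"
  shows "(\<Sum>j\<in>I. (x j - \<mu> j - c * (a j * x j / E))\<^sup>2)
     \<le> (\<Sum>j\<in>I. (x j - \<mu> j)\<^sup>2 - 2 * c * ((x j - \<mu> j) * (a j * x j / E))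
            + 2 * c * (d j * (a j / E - 2 * a j ^ 3 * (x j)\<^sup>2 / E\<^sup>2)))"
proof -
  have E: "0 < E" "(\<Sum>k\<in>I. (a k * x k)\<^sup>2) \<le> E"
    using e by (auto simp: E_def sum_nonneg add_nonneg_pos)
  have "c\<^sup>2 * (\<Sum>j\<in>I. (a j * x j / E)\<^sup>2) = c * c * ((\<Sum>j\<in>I. (a j * x j)\<^sup>2) / E) / E"
    by (simp add: power_divide sum_divide_distrib[symmetric] power2_eq_square)
  also have "\<dots> \<le> c * c / E"
    using E by (intro divide_right_mono mult_left_le) auto
  also have "\<dots> \<le> c * (2 * ((\<Sum>j\<in>I. d j * a j) - 2 * m)) / E"
    using c E by (intro divide_right_mono mult_left_mono) auto
  also have "\<dots> = 2 * c * (((\<Sum>j\<in>I. d j * a j) - 2 * m) / E)"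
    by simp
  also have "\<dots> \<le> 2 * c * (\<Sum>j\<in>I. d j * (a j / E - 2 * a j ^ 3 * (x j)\<^sup>2 / E\<^sup>2))"
    using shrinkage_divergence_lower_bound[OF e m, where x = x] c(1)
    unfolding E_def by (intro mult_left_mono) auto
  finally have key: "c\<^sup>2 * (\<Sum>j\<in>I. (a j * x j / E)\<^sup>2)
      \<le> 2 * c * (\<Sum>j\<in>I. d j * (a j / E - 2 * a j ^ 3 * (x j)\<^sup>2 / E\<^sup>2))" .
  have square: "(u - c * v)\<^sup>2 = u\<^sup>2 - 2 * c * (u * v) + c\<^sup>2 * v\<^sup>2" for u v :: real
    by (simp add: power2_eq_square algebra_simps)
  show ?thesis
    using key by (simp only: square sum.distrib sum_distrib_left[symmetric])
qed

lemma regularized_shrinkage_risk_le: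
  fixes \<sigma> \<mu> a :: "'i \<Rightarrow> real"
  assumes \<sigma>: "\<And>i. \<sigma> i > 0" and I: "finite I" and e: "e > 0" and a: "\<And>j. j \<in> I \<Longrightarrow> a j > 0"
    and c: "0 \<le> c" "c \<le> 2 * ((\<Sum>j\<in>I. (\<sigma> j)\<^sup>2 * a j) - 2 * m)"
    and m: "0 \<le> m" "\<And>j. j \<in> I \<Longrightarrow> (\<sigma> j)\<^sup>2 * a j \<le> m"
  shows "(\<integral>\<^sup>+x. ennreal (\<Sum>j\<in>I. (x j - \<mu> j - c * (a j * x j / ((\<Sum>k\<in>I. (a k * x k)\<^sup>2) + e)))\<^sup>2)
            \<partial>PiM I (normal_factor \<mu> \<sigma>))
         \<le> ennreal (\<Sum>j\<in>I. (\<sigma> j)\<^sup>2)"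
proof -
  let ?P = "PiM I (normal_factor \<mu> \<sigma>)"
  define E where "E x = (\<Sum>k\<in>I. (a k * x k)\<^sup>2) + e" for x
  define D where "D j x = a j / E x - 2 * a j ^ 3 * (x j)\<^sup>2 / (E x)\<^sup>2" for j x
  define h where "h j x = (x j - \<mu> j) * (a j * x j / E x)" for j x
  define G where "G x = (\<Sum>j\<in>I. (x j - \<mu> j)\<^sup>2 - 2 * c * h j x + 2 * c * ((\<sigma> j)\<^sup>2 * D j x))" for x
  have loss_le: "(\<Sum>j\<in>I. (x j - \<mu> j - c * (a j * x j / E x))\<^sup>2) \<le> G x" for x
    unfolding G_def E_def D_def h_def by (rule shrinkage_loss_le_unbiased_risk_estimate[OF e c m])
  note square = integrable_PiM_normal_factor_square[where \<sigma> = \<sigma>, OF \<sigma>]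
    integral_PiM_normal_factor_square[where \<sigma> = \<sigma>, OF \<sigma>]
  have stein: "integrable ?P (h j)" "integrable ?P (D j)"
    "(\<integral>x. h j x \<partial>?P) = (\<sigma> j)\<^sup>2 * (\<integral>x. D j x \<partial>?P)"
    if "j \<in> I" for j
    unfolding h_def E_def D_def
    by (fact integrable_stein_shrinkage[where \<sigma> = \<sigma> and a = a, OF \<sigma> I that e a[OF that]]
        stein_identity_shrinkage[where \<sigma> = \<sigma> and a = a, OF \<sigma> I that e a[OF that]])+
  have G_int: "integrable ?P G"
    unfolding G_def using square stein
    by (intro Bochner_Integration.integrable_sum Bochner_Integration.integrable_add
        Bochner_Integration.integrable_diff Bochner_Integration.integrable_mult_right) auto
  have "(\<integral>x. G x \<partial>?P) = (\<Sum>j\<in>I. (\<sigma> j)\<^sup>2)"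
    unfolding G_def using square stein by (subst Bochner_Integration.integral_sum) auto
  moreover have "0 \<le> G x" for x
    using loss_le[of x] sum_nonneg[of I "\<lambda>j. (x j - \<mu> j - c * (a j * x j / E x))\<^sup>2"] by simp
  ultimately have "(\<integral>\<^sup>+x. ennreal (G x) \<partial>?P) = ennreal (\<Sum>j\<in>I. (\<sigma> j)\<^sup>2)"
    using G_int by (simp add: nn_integral_eq_integral)
  moreover have "(\<integral>\<^sup>+x. ennreal (\<Sum>j\<in>I. (x j - \<mu> j - c * (a j * x j / E x))\<^sup>2) \<partial>?P)
      \<le> (\<integral>\<^sup>+x. ennreal (G x) \<partial>?P)"
    by (intro nn_integral_mono ennreal_leI loss_le)
  ultimately show ?thesis
    unfolding E_def by simp
qed

lemma nn_integral_le_of_tendsto: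
  fixes u :: "nat \<Rightarrow> 'a \<Rightarrow> ennreal"
  assumes "\<And>n. u n \<in> borel_measurable M" and "\<And>x. (\<lambda>n. u n x) \<longlonglongrightarrow> f x"
    and "\<And>n. integral\<^sup>N M (u n) \<le> B"
  shows "integral\<^sup>N M f \<le> B"
proof -
  have "integral\<^sup>N M f = (\<integral>\<^sup>+x. liminf (\<lambda>n. u n x) \<partial>M)"
    using assms(2) by (intro nn_integral_cong lim_imp_Liminf[symmetric]) auto
  also have "\<dots> \<le> liminf (\<lambda>n. integral\<^sup>N M (u n))"
    using assms(1) by (rule nn_integral_liminf)
  also have "\<dots> \<le> limsup (\<lambda>n. integral\<^sup>N M (u n))"
    by (rule Liminf_le_Limsup) simp
  also have "\<dots> \<le> B"
    using assms(3) by (intro Limsup_bounded always_eventually) auto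
  finally show ?thesis .
qed

lemma tendsto_regularized_shrinkage_loss:
  "(\<lambda>n. ennreal (\<Sum>j\<in>{1..p}.
      (x j - \<theta> j - c * (a j * x j / ((\<Sum>k\<in>{1..p}. (a k * x k)\<^sup>2) + inverse (Suc n))))\<^sup>2))
    \<longlonglongrightarrow> ennreal (\<Sum>j\<in>{1..p}. (delta_est p c a x j - \<theta> j)\<^sup>2)"
proof -
  define R where "R = (\<Sum>k\<in>{1..p}. (a k * x k)\<^sup>2)"
  have shrinkage: "(\<lambda>n. a j * x j / (R + inverse (Suc n))) \<longlonglongrightarrow> a j * x j / R"
    if j: "j \<in> {1..p}" for j
  proof (cases "R = 0")
    case True
    have "(a j * x j)\<^sup>2 \<le> R" unfolding R_def using j by (intro member_le_sum) auto
    then have zero: "a j * x j = 0" using True by simp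
    show ?thesis unfolding zero by simp
  next
    case False
    then show ?thesis
      using LIMSEQ_inverse_real_of_nat_add[of R] by (auto intro!: tendsto_intros)
  qed
  have delta: "x j - \<theta> j - c * (a j * x j / R) = delta_est p c a x j - \<theta> j" for j
    unfolding delta_est_def R_def by simp
  show ?thesis
    unfolding R_def[symmetric] delta[symmetric]
    by (intro tendsto_ennrealI tendsto_sum tendsto_power tendsto_diff tendsto_const tendsto_mult
        shrinkage)
qed

text \<open>The value of \<open>\<sigma>\<close> outside \<open>{1..p}\<close> is irrelevant; \<open>1\<close> makes every factor a probability space.\<close>

lemma normal_diag_eq_PiM_normal_factor:
  "normal_diag p \<theta> d = PiM {1..p} (normal_factor \<theta> (\<lambda>j. sqrt (if j \<in> {1..p} then d j else 1)))"
  unfolding normal_diag_def normal_factor_def by (intro PiM_cong) auto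

text \<open>The regularisation \<open>+ e\<close> makes the shrinkage bounded, as Stein's identity requires; the risk of
  \<open>delta_est\<close> itself then follows by Fatou's lemma as \<open>e \<rightarrow> 0\<close>.\<close>

lemma minimax_delta_est:
  fixes p :: nat and d a :: "nat \<Rightarrow> real" and c :: real
  assumes d: "\<forall>j\<in>{1..p}. d j > 0" and a: "\<forall>j\<in>{1..p}. a j > 0"
    and c: "0 \<le> c" "c \<le> 2 * cstar p d a"
  shows "minimax p d (\<lambda>x. delta_est p c a x)"
  unfolding minimax_def
proof
  fix \<theta> :: "nat \<Rightarrow> real"
  define \<sigma> where "\<sigma> j = sqrt (if j \<in> {1..p} then d j else 1)" for j
  have \<sigma>: "\<sigma> i > 0" for i
    using d unfolding \<sigma>_def by auto
  have \<sigma>_sq: "(\<sigma> j)\<^sup>2 = d j" if "j \<in> {1..p}" for j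
    using d[rule_format, OF that] that unfolding \<sigma>_def by simp
  define m where "m = Max ((\<lambda>j. d j * a j) ` {1..p})"
  have m: "(\<sigma> j)\<^sup>2 * a j \<le> m" if "j \<in> {1..p}" for j
    unfolding m_def \<sigma>_sq[OF that] using that by (intro Max_ge) auto
  have c': "c \<le> 2 * ((\<Sum>j\<in>{1..p}. (\<sigma> j)\<^sup>2 * a j) - 2 * m)"
    using c unfolding cstar_def m_def by (simp add: \<sigma>_sq)
  define u where "u n x = ennreal (\<Sum>j\<in>{1..p}.
      (x j - \<theta> j - c * (a j * x j / ((\<Sum>k\<in>{1..p}. (a k * x k)\<^sup>2) + inverse (Suc n))))\<^sup>2)" for n x
  have risk: "integral\<^sup>N (normal_diag p \<theta> d) (u n) \<le> ennreal (\<Sum>j\<in>{1..p}. d j)" for n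
  proof (cases "p = 0")
    case False
    then have "0 < (\<sigma> 1)\<^sup>2 * a 1" "(\<sigma> 1)\<^sup>2 * a 1 \<le> m"
      using \<sigma>[of 1] a m[of 1] by auto
    with regularized_shrinkage_risk_le[OF \<sigma> _ _ _ c(1) c' _ m, of "inverse (Suc n)" \<theta>] a
    show ?thesis
      unfolding normal_diag_eq_PiM_normal_factor \<sigma>_def[symmetric] u_def by (simp add: \<sigma>_sq)
  qed (simp add: u_def[abs_def])
  have "u n \<in> borel_measurable (normal_diag p \<theta> d)" for n
    unfolding normal_diag_eq_PiM_normal_factor u_def by measurable
  moreover have "(\<lambda>n. u n x) \<longlonglongrightarrow> ennreal (\<Sum>j\<in>{1..p}. (delta_est p c a x j - \<theta> j)\<^sup>2)" for x
    unfolding u_def by (rule tendsto_regularized_shrinkage_loss)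
  ultimately show "(\<integral>\<^sup>+x. ennreal (\<Sum>j = 1..p. (delta_est p c a x j - \<theta> j)\<^sup>2) \<partial>normal_diag p \<theta> d)
      \<le> ennreal (\<Sum>j = 1..p. d j)"
    using risk by (rule nn_integral_le_of_tendsto)
qed

section \<open>The optimisation problem\<close>

locale shrinkage_weights =
  fixes p :: nat and w :: "nat \<Rightarrow> real" and S :: real
  assumes three_le_p: "3 \<le> p"
    and weight_pos: "\<And>j. j \<in> {1..p} \<Longrightarrow> 0 < w j"
    and weight_le_Suc: "\<And>j. 1 \<le> j \<Longrightarrow> j < p \<Longrightarrow> w j \<le> w (Suc j)"
    and S_pos: "0 < S"
begin

lemma weight_mono:
  assumes "1 \<le> j" "j \<le> k" "k \<le> p"
  shows "w j \<le> w k"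
  using assms(2,3)
proof (induction k rule: dec_induct)
  case (step k)
  then show ?case using weight_le_Suc[of k] assms(1) by simp
qed simp

definition T :: "nat \<Rightarrow> real" where
  "T n = (\<Sum>k=1..n. w k)"

definition \<nu> :: nat where
  "\<nu> = Max {n \<in> {3..p}. (real n - 2) * w n \<le> T n}"

definition M :: real where
  "M = (real \<nu> - 2)\<^sup>2 / T \<nu> + (\<Sum>j=\<nu>+1..p. 1 / w j)"

definition K :: real where
  "K = sqrt S * inverse (sqrt M)"

definition level :: real where
  "level = K * (real \<nu> - 2) / T \<nu>"

definition opt :: "nat \<Rightarrow> real" where
  "opt j = (if j \<le> \<nu> then level else K / w j)"

definition admissible :: "(nat \<Rightarrow> real) \<Rightarrow> bool" where
  "admissible b \<longleftrightarrow> (\<forall>j\<in>{1..p}. 0 \<le> b j) \<and> (\<Sum>j=1..p. w j * (b j)\<^sup>2) = S"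

definition objective :: "(nat \<Rightarrow> real) \<Rightarrow> real" where
  "objective b = (\<Sum>j=1..p. b j) - 2 * Max (b ` {1..p})"

lemma admissible_cong:
  assumes "\<And>j. j \<in> {1..p} \<Longrightarrow> b j = b' j"
  shows "admissible b \<longleftrightarrow> admissible b'"
proof -
  have "(\<Sum>j=1..p. w j * (b j)\<^sup>2) = (\<Sum>j=1..p. w j * (b' j)\<^sup>2)"
    using assms by (intro sum.cong) auto
  then show ?thesis
    unfolding admissible_def using assms by auto
qed

lemma objective_cong:
  assumes "\<And>j. j \<in> {1..p} \<Longrightarrow> b j = b' j"
  shows "objective b = objective b'"
proof -
  have "(\<Sum>j=1..p. b j) = (\<Sum>j=1..p. b' j)"
    using assms by (intro sum.cong) auto
  moreover have "b ` {1..p} = b' ` {1..p}"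
    using assms by (intro image_cong) auto
  ultimately show ?thesis
    unfolding objective_def by simp
qed

lemma \<nu>_mem: "\<nu> \<in> {n \<in> {3..p}. (real n - 2) * w n \<le> T n}"
proof -
  have "T 3 = w 1 + w 2 + w 3"
    by (simp add: T_def numeral_3_eq_3 numeral_2_eq_2)
  then have "3 \<in> {n \<in> {3..p}. (real n - 2) * w n \<le> T n}"
    using three_le_p weight_pos[of 1] weight_pos[of 2] by auto
  then show ?thesis
    unfolding \<nu>_def by (intro Max_in) auto
qed

lemma three_le_\<nu>: "3 \<le> \<nu>" and \<nu>_le_p: "\<nu> \<le> p"
  using \<nu>_mem by auto

lemma T_\<nu>_pos: "0 < T \<nu>"
  unfolding T_def using three_le_\<nu> \<nu>_le_p by (intro sum_pos weight_pos) auto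

lemma weight_le_split:
  assumes "j \<in> {1..\<nu>}"
  shows "(real \<nu> - 2) * w j \<le> T \<nu>"
proof -
  have "(real \<nu> - 2) * w j \<le> (real \<nu> - 2) * w \<nu>"
    using assms three_le_\<nu> \<nu>_le_p by (intro mult_left_mono weight_mono) auto
  moreover have "(real \<nu> - 2) * w \<nu> \<le> T \<nu>"
    using \<nu>_mem by simp
  ultimately show ?thesis by linarith
qed

lemma split_lt_weight:
  assumes "j \<in> {\<nu>+1..p}"
  shows "T \<nu> < (real \<nu> - 2) * w j"
proof -
  have "\<not> (real (\<nu> + 1) - 2) * w (\<nu> + 1) \<le> T (\<nu> + 1)"
  proof
    assume "(real (\<nu> + 1) - 2) * w (\<nu> + 1) \<le> T (\<nu> + 1)"
    then have "\<nu> + 1 \<le> Max {n \<in> {3..p}. (real n - 2) * w n \<le> T n}"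
      using assms three_le_\<nu> by (intro Max_ge) auto
    then show False
      unfolding \<nu>_def[symmetric] by simp
  qed
  then have "T \<nu> < (real \<nu> - 2) * w (\<nu> + 1)"
    by (simp add: T_def algebra_simps)
  also have "\<dots> \<le> (real \<nu> - 2) * w j"
    using assms three_le_\<nu> by (intro mult_left_mono weight_mono) auto
  finally show ?thesis .
qed

lemma M_pos: "0 < M"
proof -
  have "0 < (real \<nu> - 2)\<^sup>2 / T \<nu>"
    using three_le_\<nu> T_\<nu>_pos by simp
  moreover have "0 \<le> (\<Sum>j=\<nu>+1..p. 1 / w j)"
    using weight_pos three_le_\<nu> by (intro sum_nonneg) (simp add: less_imp_le)
  ultimately show ?thesis unfolding M_def by linarith
qed

lemma K_pos: "0 < K"
  unfolding K_def using S_pos M_pos by simp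

lemma K_square_M: "K\<^sup>2 * M = S"
  unfolding K_def using S_pos M_pos by (simp add: power_mult_distrib power_inverse)

lemma level_pos: "0 < level"
  unfolding level_def using K_pos three_le_\<nu> T_\<nu>_pos by simp

lemma opt_pos: "j \<in> {1..p} \<Longrightarrow> 0 < opt j"
  unfolding opt_def using level_pos K_pos weight_pos by simp

lemma opt_lt_level:
  assumes "j \<in> {\<nu>+1..p}"
  shows "opt j < level"
proof -
  have "0 < w j" using assms three_le_\<nu> by (intro weight_pos) auto
  moreover have "K * T \<nu> < K * ((real \<nu> - 2) * w j)"
    using split_lt_weight[OF assms] K_pos by simp
  ultimately have "K / w j < K * (real \<nu> - 2) / T \<nu>"
    using T_\<nu>_pos by (simp add: field_simps)
  then show ?thesis
    using assms by (simp add: opt_def level_def)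
qed

lemma opt_eq_level_iff: "j \<in> {1..p} \<Longrightarrow> opt j = level \<longleftrightarrow> j \<le> \<nu>"
  using opt_lt_level[of j] by (cases "j \<le> \<nu>") (auto simp: opt_def)

lemma Max_opt: "Max (opt ` {1..p}) = level"
proof (rule Max_eqI)
  show "y \<le> level" if "y \<in> opt ` {1..p}" for y
  proof -
    from that obtain j where "j \<in> {1..p}" "y = opt j" by blast
    then show ?thesis
      using opt_lt_level[of j] by (cases "j \<le> \<nu>") (auto simp: opt_def)
  qed
  show "level \<in> opt ` {1..p}"
    using three_le_\<nu> \<nu>_le_p by (intro image_eqI[of _ _ 1]) (auto simp: opt_def)
qed simp

lemma sum_split_at_\<nu>: "(\<Sum>j=1..p. f j) = (\<Sum>j=1..\<nu>. f j) + (\<Sum>j=\<nu>+1..p. f j)"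
  using \<nu>_le_p by (subst sum.union_disjoint[symmetric]) (auto intro: sum.cong)

lemma opt_below_\<nu>: "j \<le> \<nu> \<Longrightarrow> opt j = level"
  by (simp add: opt_def)

lemma opt_above_\<nu>: "\<nu> < j \<Longrightarrow> opt j = K / w j"
  by (simp add: opt_def)

lemma level_mult_T: "level * T \<nu> = K * (real \<nu> - 2)"
  unfolding level_def using T_\<nu>_pos by simp

lemma weighted_norm_opt: "(\<Sum>j=1..p. w j * (opt j)\<^sup>2) = S"
proof -
  have "(\<Sum>j=1..\<nu>. w j * (opt j)\<^sup>2) = level\<^sup>2 * T \<nu>"
    unfolding T_def sum_distrib_left by (intro sum.cong) (auto simp: opt_below_\<nu>)
  also have "\<dots> = K\<^sup>2 * ((real \<nu> - 2)\<^sup>2 / T \<nu>)"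
    unfolding level_def using T_\<nu>_pos by (simp add: power2_eq_square field_simps)
  finally have low: "(\<Sum>j=1..\<nu>. w j * (opt j)\<^sup>2) = K\<^sup>2 * ((real \<nu> - 2)\<^sup>2 / T \<nu>)" .
  have "w j * (opt j)\<^sup>2 = K\<^sup>2 * (1 / w j)" if "j \<in> {\<nu>+1..p}" for j
    using that weight_pos[of j] three_le_\<nu> by (simp add: opt_above_\<nu> power2_eq_square)
  then have high: "(\<Sum>j=\<nu>+1..p. w j * (opt j)\<^sup>2) = K\<^sup>2 * (\<Sum>j=\<nu>+1..p. 1 / w j)"
    unfolding sum_distrib_left by (intro sum.cong) auto
  show ?thesis
    unfolding sum_split_at_\<nu> low high using K_square_M by (simp add: M_def distrib_left)
qed

lemma admissible_opt: "admissible opt"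
  unfolding admissible_def using opt_pos weighted_norm_opt by (simp add: less_imp_le)

lemma objective_opt: "objective opt = K * M"
proof -
  have low: "(\<Sum>j=1..\<nu>. opt j) = real \<nu> * level"
    by (simp add: opt_below_\<nu>)
  have high: "(\<Sum>j=\<nu>+1..p. opt j) = K * (\<Sum>j=\<nu>+1..p. 1 / w j)"
    unfolding sum_distrib_left by (intro sum.cong) (auto simp: opt_above_\<nu>)
  have "objective opt = (real \<nu> - 2) * level + K * (\<Sum>j=\<nu>+1..p. 1 / w j)"
    unfolding objective_def Max_opt sum_split_at_\<nu> low high by (simp add: algebra_simps)
  also have "(real \<nu> - 2) * level = K * ((real \<nu> - 2)\<^sup>2 / T \<nu>)"
    unfolding level_def by (simp add: power2_eq_square)
  finally show ?thesis
    unfolding M_def by (simp add: distrib_left)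
qed

lemma weight_opt_le_K:
  assumes "j \<in> {1..p}"
  shows "w j * opt j \<le> K"
proof (cases "j \<le> \<nu>")
  case True
  then have "w j * opt j = K * ((real \<nu> - 2) * w j) / T \<nu>"
    by (simp add: opt_below_\<nu> level_def)
  also have "\<dots> \<le> K * T \<nu> / T \<nu>"
    using True assms weight_le_split[of j] K_pos T_\<nu>_pos
    by (intro divide_right_mono mult_left_mono) auto
  finally show ?thesis
    using T_\<nu>_pos by simp
next
  case False
  then show ?thesis
    using weight_pos[OF assms] by (simp add: opt_above_\<nu>)
qed

lemma sum_K_minus_weight_opt: "(\<Sum>j=1..p. K - w j * opt j) = 2 * K"
proof -
  have "K - w j * opt j = 0" if "j \<in> {\<nu>+1..p}" for j
    using that weight_pos[of j] three_le_\<nu> by (simp add: opt_above_\<nu>)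
  then have "(\<Sum>j=\<nu>+1..p. K - w j * opt j) = 0"
    by (intro sum.neutral) auto
  moreover have "(\<Sum>j=1..\<nu>. K - w j * opt j) = real \<nu> * K - level * T \<nu>"
    by (simp add: opt_below_\<nu> T_def sum_subtractf sum_distrib_left mult.commute)
  ultimately show ?thesis
    unfolding sum_split_at_\<nu> by (simp add: level_mult_T algebra_simps)
qed

lemma K_objective_le_inner:
  assumes "\<And>j. j \<in> {1..p} \<Longrightarrow> 0 \<le> b j"
  shows "K * objective b \<le> (\<Sum>j=1..p. w j * opt j * b j)"
proof -
  define m where "m = Max (b ` {1..p})"
  have "K * (\<Sum>j=1..p. b j) - (\<Sum>j=1..p. w j * opt j * b j) = (\<Sum>j=1..p. (K - w j * opt j) * b j)"
    by (simp add: sum_distrib_left sum_subtractf algebra_simps)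
  also have "\<dots> \<le> (\<Sum>j=1..p. (K - w j * opt j) * m)"
    unfolding m_def using weight_opt_le_K by (intro sum_mono mult_left_mono Max_ge) auto
  also have "\<dots> = 2 * K * m"
    by (simp only: sum_distrib_right[symmetric] sum_K_minus_weight_opt)
  moreover have "K * objective b = K * (\<Sum>j=1..p. b j) - 2 * K * m"
    unfolding objective_def m_def by (simp add: algebra_simps)
  ultimately show ?thesis by linarith
qed

lemma weighted_dist_opt:
  assumes "admissible b"
  shows "(\<Sum>j=1..p. w j * (opt j - b j)\<^sup>2) = 2 * (S - (\<Sum>j=1..p. w j * opt j * b j))"
proof -
  have "(\<Sum>j=1..p. w j * (opt j - b j)\<^sup>2)
      = (\<Sum>j=1..p. w j * (opt j)\<^sup>2) + (\<Sum>j=1..p. w j * (b j)\<^sup>2) - 2 * (\<Sum>j=1..p. w j * opt j * b j)"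
    by (simp add: power2_diff sum.distrib sum_subtractf sum_distrib_left algebra_simps)
  then show ?thesis
    using assms weighted_norm_opt by (simp add: admissible_def)
qed

lemma objective_le_opt:
  assumes "admissible b"
  shows "objective b \<le> objective opt"
proof -
  have "0 \<le> (\<Sum>j=1..p. w j * (opt j - b j)\<^sup>2)"
    using weight_pos by (intro sum_nonneg) (simp add: less_imp_le)
  then have "K * objective b \<le> K * (K * M)"
    using K_objective_le_inner[of b] assms weighted_dist_opt[OF assms] K_square_M
    by (simp add: admissible_def power2_eq_square)
  then show ?thesis
    using K_pos objective_opt by simp
qed

lemma objective_eq_opt_imp_eq:
  assumes "admissible b" and "objective opt \<le> objective b" and "j \<in> {1..p}"
  shows "b j = opt j"
proof -
  have "K * (K * M) \<le> K * objective b"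
    using assms(2) K_pos objective_opt by simp
  also have "\<dots> \<le> (\<Sum>j=1..p. w j * opt j * b j)"
    using assms(1) by (intro K_objective_le_inner) (simp add: admissible_def)
  finally have "S \<le> (\<Sum>j=1..p. w j * opt j * b j)"
    using K_square_M by (simp add: power2_eq_square)
  then have "(\<Sum>j=1..p. w j * (opt j - b j)\<^sup>2) \<le> 0"
    unfolding weighted_dist_opt[OF assms(1)] by simp
  moreover have "0 \<le> (\<Sum>j=1..p. w j * (opt j - b j)\<^sup>2)"
    using weight_pos by (intro sum_nonneg) (simp add: less_imp_le)
  ultimately have "(\<Sum>j=1..p. w j * (opt j - b j)\<^sup>2) = 0"
    by linarith
  then have "w j * (opt j - b j)\<^sup>2 = 0"
    using assms(3) weight_pos by (subst (asm) sum_nonneg_eq_0_iff) (auto simp: less_imp_le)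
  then show ?thesis
    using weight_pos[OF assms(3)] by simp
qed

end

locale diag_problem =
  fixes p :: nat and d \<gamma> :: "nat \<Rightarrow> real"
  assumes p3: "p \<ge> 3"
    and dpos: "\<forall>j\<in>{1..p}. d j > 0"
    and gnn: "\<forall>j\<in>{1..p}. \<gamma> j \<ge> 0"
    and sorted: "\<forall>j. 1 \<le> j \<and> j < p \<longrightarrow>
                   (d j)\<^sup>2 / (d j + \<gamma> j) \<ge> (d (j+1))\<^sup>2 / (d (j+1) + \<gamma> (j+1))"

sublocale diag_problem \<subseteq>
  shrinkage_weights p "\<lambda>j. (d j + \<gamma> j) / (d j)\<^sup>2" "\<Sum>j=1..p. (d j)\<^sup>2 / (d j + \<gamma> j)"
proof
  have pos: "0 < d j" "0 < d j + \<gamma> j" if "j \<in> {1..p}" for j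
    using dpos gnn that by (auto simp: add_pos_nonneg)
  show "3 \<le> p" by (rule p3)
  show "0 < (d j + \<gamma> j) / (d j)\<^sup>2" if "j \<in> {1..p}" for j
    using pos[OF that] by simp
  have inverse_eq: "(d k + \<gamma> k) / (d k)\<^sup>2 = inverse ((d k)\<^sup>2 / (d k + \<gamma> k))" for k
    by simp
  show "(d j + \<gamma> j) / (d j)\<^sup>2 \<le> (d (Suc j) + \<gamma> (Suc j)) / (d (Suc j))\<^sup>2"
    if "1 \<le> j" "j < p" for j
    unfolding inverse_eq
  proof (rule le_imp_inverse_le)
    show "(d (Suc j))\<^sup>2 / (d (Suc j) + \<gamma> (Suc j)) \<le> (d j)\<^sup>2 / (d j + \<gamma> j)"
      using sorted that by simp
    show "0 < (d (Suc j))\<^sup>2 / (d (Suc j) + \<gamma> (Suc j))"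
      using pos[of "Suc j"] that by simp
  qed
  show "0 < (\<Sum>j=1..p. (d j)\<^sup>2 / (d j + \<gamma> j))"
  proof (rule sum_pos)
    show "0 < (d j)\<^sup>2 / (d j + \<gamma> j)" if "j \<in> {1..p}" for j
      using pos[OF that] by simp
  qed (use p3 in auto)
qed

text \<open>Below, facts of \<open>shrinkage_weights\<close> are mostly applied with \<open>simp only\<close> or \<open>unfolding\<close>:
  plain \<open>simp\<close> rewrites \<open>1\<close> to \<open>Suc 0\<close> inside the locale parameter \<open>\<Sum>j=1..p. \<dots>\<close>,
  after which those facts no longer match.\<close>

context diag_problem
begin

lemma d_pos: "j \<in> {1..p} \<Longrightarrow> 0 < d j"
  using dpos by blast

definition a_opt :: "nat \<Rightarrow> real" where
  "a_opt j = opt j / d j"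

lemma d_mult_a_opt: "j \<in> {1..p} \<Longrightarrow> d j * a_opt j = opt j"
  using d_pos[of j] by (simp add: a_opt_def)

lemma a_opt_pos: "\<forall>j\<in>{1..p}. a_opt j > 0"
  using d_pos opt_pos by (simp add: a_opt_def)

lemma feasible_iff_admissible: "feasible p d \<gamma> a \<longleftrightarrow> admissible (\<lambda>j. d j * a j)"
proof -
  have "(d j + \<gamma> j) * (a j)\<^sup>2 = (d j + \<gamma> j) / (d j)\<^sup>2 * (d j * a j)\<^sup>2" if "j \<in> {1..p}" for j
    using d_pos[OF that] by (simp add: power_mult_distrib)
  then have "(\<Sum>j=1..p. (d j + \<gamma> j) * (a j)\<^sup>2) = (\<Sum>j=1..p. (d j + \<gamma> j) / (d j)\<^sup>2 * (d j * a j)\<^sup>2)"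
    by (intro sum.cong) auto
  moreover have "(\<forall>j\<in>{1..p}. 0 \<le> a j) \<longleftrightarrow> (\<forall>j\<in>{1..p}. 0 \<le> d j * a j)"
  proof -
    have "0 \<le> a j \<longleftrightarrow> 0 \<le> d j * a j" if "j \<in> {1..p}" for j
      using d_pos[OF that] by (simp add: zero_le_mult_iff)
    then show ?thesis by blast
  qed
  ultimately show ?thesis
    unfolding feasible_def admissible_def by simp
qed

lemma cstar_eq_objective: "cstar p d a = objective (\<lambda>j. d j * a j)"
  by (simp add: cstar_def objective_def)

lemma cstar_a_opt_eq_objective: "cstar p d a_opt = objective opt"
  unfolding cstar_eq_objective by (rule objective_cong) (simp add: d_mult_a_opt)

lemma is_solution_a_opt: "is_solution p d \<gamma> a_opt"
proof -
  have "feasible p d \<gamma> a_opt"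
    unfolding feasible_iff_admissible using admissible_opt
    by (subst admissible_cong[of _ opt]) (simp_all add: d_mult_a_opt)
  moreover have "cstar p d b \<le> cstar p d a_opt" if "feasible p d \<gamma> b" for b
    using that objective_le_opt
    unfolding feasible_iff_admissible cstar_eq_objective[of b] cstar_a_opt_eq_objective by simp
  ultimately show ?thesis
    unfolding is_solution_def by simp
qed

lemma is_solution_unique:
  assumes "is_solution p d \<gamma> b"
  shows "\<forall>j\<in>{1..p}. b j = a_opt j"
proof
  fix j assume j: "j \<in> {1..p}"
  have "admissible (\<lambda>j. d j * b j)" and "objective opt \<le> objective (\<lambda>j. d j * b j)"
    using assms is_solution_a_opt
    unfolding is_solution_def feasible_iff_admissible cstar_eq_objective
      cstar_a_opt_eq_objective[symmetric]
    by auto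
  then have "d j * b j = opt j"
    using objective_eq_opt_imp_eq j by blast
  then show "b j = a_opt j"
    using d_pos[OF j] by (simp add: a_opt_def field_simps)
qed

lemma image_d_mult_a_opt: "(\<lambda>j. d j * a_opt j) ` {1..p} = opt ` {1..p}"
  by (intro image_cong) (simp_all add: d_mult_a_opt)

lemma max_index_a_opt:
  "Max {j \<in> {1..p}. d j * a_opt j = Max ((\<lambda>j. d j * a_opt j) ` {1..p})} = \<nu>"
proof -
  have level_iff: "d j * a_opt j = level \<longleftrightarrow> j \<le> \<nu>" if "j \<in> {1..p}" for j
    by (simp only: d_mult_a_opt[OF that] opt_eq_level_iff[OF that])
  have level_set: "{j \<in> {1..p}. d j * a_opt j = level} = {1..\<nu>}"
  proof (rule set_eqI)
    fix j
    show "j \<in> {j \<in> {1..p}. d j * a_opt j = level} \<longleftrightarrow> j \<in> {1..\<nu>}"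
      using level_iff[of j] \<nu>_le_p by auto
  qed
  show ?thesis
    unfolding image_d_mult_a_opt Max_opt level_set using three_le_\<nu> by (intro Max_eqI) auto
qed

lemma T_eq: "T n = (\<Sum>k=1..n. (d k + \<gamma> k) / (d k)\<^sup>2)"
  by (simp add: T_def)

lemma M_eq: "M = (real \<nu> - 2)\<^sup>2 / T \<nu> + (\<Sum>j=\<nu>+1..p. (d j)\<^sup>2 / (d j + \<gamma> j))"
  by (simp add: M_def)

lemma cstar_a_opt: "cstar p d a_opt = K * M"
  by (simp only: cstar_a_opt_eq_objective objective_opt)

lemma cstar_a_opt_pos: "0 < cstar p d a_opt"
  using K_pos M_pos by (simp only: cstar_a_opt mult_pos_pos)

lemma a_opt_formulas:
  "3 \<le> \<nu>
   \<and> (\<forall>j\<in>{1..\<nu>}. d j * a_opt j = d 1 * a_opt 1)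
   \<and> (\<forall>j\<in>{\<nu>+1..p}. d 1 * a_opt 1 > d j * a_opt j)
   \<and> (\<forall>j\<in>{1..\<nu>}. a_opt j = K * inverse (T \<nu>) * (real \<nu> - 2) / d j)
   \<and> (\<forall>j\<in>{\<nu>+1..p}. a_opt j = K * (d j / (d j + \<gamma> j)))
   \<and> cstar p d a_opt = K * M
   \<and> K * M > 0"
proof (intro conjI ballI three_le_\<nu> cstar_a_opt)
  have top: "d j * a_opt j = level" if "j \<in> {1..\<nu>}" for j
  proof -
    have "j \<in> {1..p}" "j \<le> \<nu>" using that \<nu>_le_p by auto
    then show ?thesis by (simp only: d_mult_a_opt opt_below_\<nu>)
  qed
  have d1: "d 1 * a_opt 1 = level"
    using three_le_\<nu> by (intro top) simp
  show "d j * a_opt j = d 1 * a_opt 1" if "j \<in> {1..\<nu>}" for j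
    using top[OF that] d1 by simp
  show "d 1 * a_opt 1 > d j * a_opt j" if "j \<in> {\<nu>+1..p}" for j
  proof -
    have "j \<in> {1..p}" using that by auto
    then show ?thesis
      using opt_lt_level[OF that] by (simp only: d1 d_mult_a_opt)
  qed
  show "a_opt j = K * inverse (T \<nu>) * (real \<nu> - 2) / d j" if "j \<in> {1..\<nu>}" for j
  proof -
    have "j \<le> \<nu>" using that by simp
    then show ?thesis
      unfolding a_opt_def opt_below_\<nu>[OF \<open>j \<le> \<nu>\<close>] level_def by (simp add: divide_inverse)
  qed
  show "a_opt j = K * (d j / (d j + \<gamma> j))" if "j \<in> {\<nu>+1..p}" for j
  proof -
    have "\<nu> < j" "0 < d j" using that d_pos[of j] three_le_\<nu> by auto
    then show ?thesis
      unfolding a_opt_def by (simp only: opt_above_\<nu>) (simp add: power2_eq_square)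
  qed
  show "K * M > 0"
    using K_pos M_pos by simp
qed

end

theorem theorem2:
  fixes p :: nat and d \<gamma> :: "nat \<Rightarrow> real"
  assumes p3: "p \<ge> 3"
    and dpos: "\<forall>j\<in>{1..p}. d j > 0"
    and gnn: "\<forall>j\<in>{1..p}. \<gamma> j \<ge> 0"
    and sorted: "\<forall>j. 1 \<le> j \<and> j < p \<longrightarrow>
                   (d j)\<^sup>2 / (d j + \<gamma> j) \<ge> (d (j+1))\<^sup>2 / (d (j+1) + \<gamma> (j+1))"
  shows "\<exists>a. is_solution p d \<gamma> a
           \<and> (\<forall>b. is_solution p d \<gamma> b \<longrightarrow> (\<forall>j\<in>{1..p}. b j = a j))
           \<and> (let mx = Max ((\<lambda>j. d j * a j) ` {1..p});
                  \<nu> = Max {j\<in>{1..p}. d j * a j = mx};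
                  S = (\<Sum>j=1..p. (d j)\<^sup>2 / (d j + \<gamma> j));
                  T = (\<Sum>k=1..\<nu>. (d k + \<gamma> k) / (d k)\<^sup>2);
                  M = (real \<nu> - 2)\<^sup>2 / T + (\<Sum>j=\<nu>+1..p. (d j)\<^sup>2 / (d j + \<gamma> j));
                  K = sqrt S * inverse (sqrt M)
              in \<nu> \<ge> 3
                 \<and> (\<forall>j\<in>{1..\<nu>}. d j * a j = d 1 * a 1)
                 \<and> (\<forall>j\<in>{\<nu>+1..p}. d 1 * a 1 > d j * a j)
                 \<and> (\<forall>j\<in>{1..\<nu>}. a j = K * inverse T * (real \<nu> - 2) / d j)
                 \<and> (\<forall>j\<in>{\<nu>+1..p}. a j = K * (d j / (d j + \<gamma> j)))
                 \<and> cstar p d a = K * M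
                 \<and> K * M > 0)
           \<and> minimax p d (\<lambda>x. delta_est p (cstar p d a) a x)"
proof -
  interpret diag_problem p d \<gamma>
    using assms by unfold_locales
  have minimax: "minimax p d (\<lambda>x. delta_est p (cstar p d a_opt) a_opt x)"
    using cstar_a_opt_pos by (intro minimax_delta_est[OF dpos a_opt_pos]) auto
  show ?thesis
  proof (intro exI[of _ a_opt] conjI allI impI is_solution_a_opt minimax)
    show "\<forall>j\<in>{1..p}. b j = a_opt j" if "is_solution p d \<gamma> b" for b
      using that by (rule is_solution_unique)
  qed (unfold Let_def max_index_a_opt T_eq[symmetric] M_eq[symmetric] K_def[symmetric],
       rule a_opt_formulas)
qed

end
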